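(* Let $G$ and $H$ be two nontrivial connected graphs. Then $hn_{cc}(G\boxtimes H)=2$.
   Context: All graphs are finite, simple and undirected. For a graph $G$ and $S\subseteq V(G)$, the cycle interval $\langle S\rangle$ consists of the vertices of $S$ together with every vertex $w\in V(G)\setminus S$ such that the induced subgraph $G[S\cup\{w\}]$ contains a cycle through $w$. $S$ is cycle convex if $\langle S\rangle=S$. The cycle convex hull $\langle S\rangle_C$ is the smallest cycle convex set containing $S$. A set $S$ is a (cycle) hull set if $\langle S\rangle_C=V(G)$, and the cycle hull number $hn_{cc}(G)$ is the minimum cardinality of a hull set. The strong product $G\boxtimes H$ has vertex set $V(G)\times V(H)$, with $(g_1,h_1)\sim(g_2,h_2)$ iff ($g_1\sim g_2$ and $h_1=h_2$) or ($g_1=g_2$ and $h_1\sim h_2$) or ($g_1\sim g_2$ and $h_1\sim h_2$). A graph is nontrivial if it has at least two vertices. *)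

theory Defs
  imports Main
begin

definition graph :: "'a set \<Rightarrow> ('a \<Rightarrow> 'a \<Rightarrow> bool) \<Rightarrow> bool" where
  "graph V E \<longleftrightarrow> finite V \<and> (\<forall>x y. E x y \<longrightarrow> E y x) \<and> (\<forall>x. \<not> E x x)
     \<and> (\<forall>x y. E x y \<longrightarrow> x \<in> V \<and> y \<in> V)"

definition is_walk :: "('a \<Rightarrow> 'a \<Rightarrow> bool) \<Rightarrow> 'a list \<Rightarrow> bool" where
  "is_walk E p \<longleftrightarrow> p \<noteq> [] \<and> (\<forall>i. Suc i < length p \<longrightarrow> E (p ! i) (p ! Suc i))"

definition connected_graph :: "'a set \<Rightarrow> ('a \<Rightarrow> 'a \<Rightarrow> bool) \<Rightarrow> bool" where
  "connected_graph V E \<longleftrightarrow> V \<noteq> {} \<and>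
     (\<forall>x\<in>V. \<forall>y\<in>V. \<exists>p. is_walk E p \<and> hd p = x \<and> last p = y)"

definition is_cycle :: "('a \<Rightarrow> 'a \<Rightarrow> bool) \<Rightarrow> 'a list \<Rightarrow> bool" where
  "is_cycle E c \<longleftrightarrow> length c \<ge> 3 \<and> distinct c \<and> is_walk E c \<and> E (last c) (hd c)"

definition cycle_through_in :: "('a \<Rightarrow> 'a \<Rightarrow> bool) \<Rightarrow> 'a set \<Rightarrow> 'a \<Rightarrow> bool" where
  "cycle_through_in E T w \<longleftrightarrow> (\<exists>c. is_cycle E c \<and> set c \<subseteq> T \<and> w \<in> set c)"

definition cycle_interval :: "'a set \<Rightarrow> ('a \<Rightarrow> 'a \<Rightarrow> bool) \<Rightarrow> 'a set \<Rightarrow> 'a set" where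
  "cycle_interval V E S = S \<union> {w \<in> V - S. cycle_through_in E (S \<union> {w}) w}"

definition cycle_convex :: "'a set \<Rightarrow> ('a \<Rightarrow> 'a \<Rightarrow> bool) \<Rightarrow> 'a set \<Rightarrow> bool" where
  "cycle_convex V E S \<longleftrightarrow> cycle_interval V E S = S"

definition cycle_hull :: "'a set \<Rightarrow> ('a \<Rightarrow> 'a \<Rightarrow> bool) \<Rightarrow> 'a set \<Rightarrow> 'a set" where
  "cycle_hull V E S = \<Inter> {T. T \<subseteq> V \<and> S \<subseteq> T \<and> cycle_convex V E T}"

definition hull_set :: "'a set \<Rightarrow> ('a \<Rightarrow> 'a \<Rightarrow> bool) \<Rightarrow> 'a set \<Rightarrow> bool" where
  "hull_set V E S \<longleftrightarrow> S \<subseteq> V \<and> cycle_hull V E S = V"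

definition cycle_hull_number :: "'a set \<Rightarrow> ('a \<Rightarrow> 'a \<Rightarrow> bool) \<Rightarrow> nat" where
  "cycle_hull_number V E = (LEAST k. \<exists>S. hull_set V E S \<and> card S = k)"

definition strong_prod_V :: "'a set \<Rightarrow> 'b set \<Rightarrow> ('a \<times> 'b) set" where
  "strong_prod_V VG VH = VG \<times> VH"

definition strong_prod_E :: "('a \<Rightarrow> 'a \<Rightarrow> bool) \<Rightarrow> ('b \<Rightarrow> 'b \<Rightarrow> bool)
    \<Rightarrow> ('a \<times> 'b) \<Rightarrow> ('a \<times> 'b) \<Rightarrow> bool" where
  "strong_prod_E EG EH = (\<lambda>(g1, h1) (g2, h2).
      (EG g1 g2 \<and> h1 = h2) \<or> (g1 = g2 \<and> EH h1 h2) \<or> (EG g1 g2 \<and> EH h1 h2))"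

end

theory Submission
  imports Defs
begin

text \<open>In the strong product, the four vertices of \<open>{g, g'} \<times> {h, h'}\<close> for edges \<open>g g'\<close> of
\<open>G\<close> and \<open>h h'\<close> of \<open>H\<close> form a clique, and a cycle convex set containing two vertices of a
triangle contains the third. Hence a cycle convex set containing the diagonal
\<open>(g\<^sub>1, h\<^sub>1), (g\<^sub>2, h\<^sub>2)\<close> of such a square contains the square, then by connectivity of \<open>G\<close>
all of \<open>V(G) \<times> {h\<^sub>1, h\<^sub>2}\<close>, and then by connectivity of \<open>H\<close> every layer \<open>V(G) \<times> {h}\<close>.
Conversely, a set of at most one vertex is cycle convex because a cycle has three vertices,
so it is not a hull set of a graph with at least two vertices.\<close>

lemma is_walk_ConsD:
  assumes "is_walk E (a # b # p)"
  shows "E a b" and "is_walk E (b # p)"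
  using assms unfolding is_walk_def
  by (metis Suc_less_eq length_Cons nth_Cons_0 nth_Cons_Suc zero_less_Suc, auto)

lemma is_walk_last_in_closed:
  assumes "is_walk E p" "hd p \<in> X" "\<And>x y. x \<in> X \<Longrightarrow> E x y \<Longrightarrow> y \<in> X"
  shows "last p \<in> X"
  using assms(1,2)
proof (induction p rule: induct_list012)
  case 1
  then show ?case by (simp add: is_walk_def)
next
  case (2 a)
  then show ?case by simp
next
  case (3 a b p)
  then show ?case using is_walk_ConsD[OF "3.prems"(1)] assms(3) by simp
qed

lemma connected_graph_subset_closed:
  assumes "connected_graph V E" "x \<in> V" "x \<in> X" "\<And>x y. x \<in> X \<Longrightarrow> E x y \<Longrightarrow> y \<in> X"
  shows "V \<subseteq> X"
proof
  fix y assume "y \<in> V"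
  then obtain p where "is_walk E p" "hd p = x" "last p = y"
    using assms(1,2) unfolding connected_graph_def by blast
  then show "y \<in> X" using is_walk_last_in_closed[of E p X] assms(3,4) by simp
qed

lemma connected_graph_has_neighbour:
  assumes "connected_graph V E" "card V \<ge> 2" "x \<in> V"
  obtains y where "E x y"
proof -
  have "\<not> V \<subseteq> {x}"
  proof
    assume "V \<subseteq> {x}"
    then have "card V \<le> 1" using card_mono[of "{x}" V] by simp
    then show False using assms(2) by simp
  qed
  then obtain y where y: "y \<in> V" "y \<noteq> x" by blast
  then obtain p where p: "is_walk E p" "hd p = x" "last p = y"
    using assms(1,3) unfolding connected_graph_def by blast
  have "p \<noteq> []" using p(1) by (simp add: is_walk_def)
  then obtain q where "p = x # q" using p(2) by (cases p) auto
  moreover have "q \<noteq> []" using calculation p(3) y(2) by auto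
  ultimately obtain b r where "p = x # b # r" by (cases q) auto
  then have "E x b" using p(1) is_walk_ConsD(1) by simp
  then show ?thesis by (rule that)
qed

lemma cycle_convex_triangle:
  assumes "cycle_convex V E T" "x \<in> V" "distinct [x, a, b]"
    and "E x a" "E a b" "E b x" "a \<in> T" "b \<in> T"
  shows "x \<in> T"
proof (rule ccontr)
  assume "x \<notin> T"
  have "is_walk E [x, a, b]"
    using assms(4,5) by (auto simp: is_walk_def less_Suc_eq)
  then have "is_cycle E [x, a, b]"
    using assms(3,6) by (simp add: is_cycle_def)
  then have "cycle_through_in E (T \<union> {x}) x"
    unfolding cycle_through_in_def using assms(7,8) by (intro exI[of _ "[x, a, b]"]) auto
  then have "x \<in> cycle_interval V E T"
    using assms(2) \<open>x \<notin> T\<close> by (simp add: cycle_interval_def)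
  then show False using assms(1) \<open>x \<notin> T\<close> by (simp add: cycle_convex_def)
qed

lemma cycle_convex_card_le_1:
  assumes "finite S" "card S \<le> 1"
  shows "cycle_convex V E S"
proof -
  have "\<not> cycle_through_in E (S \<union> {w}) w" for w
  proof
    assume "cycle_through_in E (S \<union> {w}) w"
    then obtain c where c: "is_cycle E c" "set c \<subseteq> S \<union> {w}"
      unfolding cycle_through_in_def by blast
    have "3 \<le> card (set c)" using c(1) distinct_card by (fastforce simp: is_cycle_def)
    also have "\<dots> \<le> card (S \<union> {w})" using c(2) assms(1) by (simp add: card_mono)
    also have "\<dots> \<le> 2" using assms by (simp add: card_insert_if)
    finally show False by simp
  qed
  then show ?thesis unfolding cycle_convex_def cycle_interval_def by auto
qed

lemma cycle_hull_eq_self: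
  assumes "S \<subseteq> V" "cycle_convex V E S"
  shows "cycle_hull V E S = S"
  using assms unfolding cycle_hull_def by blast

lemma hull_setI:
  assumes "S \<subseteq> V" "\<And>T. T \<subseteq> V \<Longrightarrow> S \<subseteq> T \<Longrightarrow> cycle_convex V E T \<Longrightarrow> V \<subseteq> T"
  shows "hull_set V E S"
proof -
  have "cycle_convex V E V" by (auto simp: cycle_convex_def cycle_interval_def)
  then show ?thesis using assms unfolding hull_set_def cycle_hull_def by blast
qed

lemma hull_set_card_ge_2:
  assumes "finite V" "card V \<ge> 2" "hull_set V E S"
  shows "card S \<ge> 2"
proof (rule ccontr)
  assume "\<not> card S \<ge> 2"
  have "S \<subseteq> V" using assms(3) by (simp add: hull_set_def)
  then have "finite S" using assms(1) finite_subset by blast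
  moreover have "card S \<le> 1" using \<open>\<not> card S \<ge> 2\<close> by simp
  ultimately have "cycle_hull V E S = S"
    using \<open>S \<subseteq> V\<close> cycle_convex_card_le_1 cycle_hull_eq_self by blast
  then have "V = S" using assms(3) by (simp add: hull_set_def)
  then show False using \<open>\<not> card S \<ge> 2\<close> assms(2) by simp
qed

lemma cycle_hull_number_eq_2:
  assumes "finite V" "card V \<ge> 2" "hull_set V E S" "card S = 2"
  shows "cycle_hull_number V E = 2"
  unfolding cycle_hull_number_def
  using assms hull_set_card_ge_2 by (intro Least_equality) blast+

lemma strong_prod_E_iff [simp]:
  "strong_prod_E EG EH (g, h) (g', h') \<longleftrightarrow>
     (EG g g' \<and> h = h') \<or> (g = g' \<and> EH h h') \<or> (EG g g' \<and> EH h h')"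
  by (simp add: strong_prod_E_def)

lemma strong_prod_square_clique:
  assumes "graph VG EG" "graph VH EH" "EG g g'" "EH h h'"
    and "p \<in> {g, g'} \<times> {h, h'}" "q \<in> {g, g'} \<times> {h, h'}" "p \<noteq> q"
  shows "strong_prod_E EG EH p q"
proof -
  have "EG g' g" "EH h' h" using assms(1-4) by (auto simp: graph_def)
  then show ?thesis using assms(3-7) by auto
qed

lemma strong_prod_square_subset:
  assumes "graph VG EG" "graph VH EH"
    and convex: "cycle_convex (strong_prod_V VG VH) (strong_prod_E EG EH) T"
    and "EG g g'" "EH h h'"
    and "u \<in> {g, g'} \<times> {h, h'}" "v \<in> {g, g'} \<times> {h, h'}" "u \<noteq> v" "u \<in> T" "v \<in> T"
  shows "{g, g'} \<times> {h, h'} \<subseteq> T"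
proof
  fix x assume x: "x \<in> {g, g'} \<times> {h, h'}"
  show "x \<in> T"
  proof (cases "x = u \<or> x = v")
    case False
    note clique = strong_prod_square_clique[OF assms(1,2,4,5)]
    have "{g, g'} \<times> {h, h'} \<subseteq> strong_prod_V VG VH"
      using assms(1,2,4,5) by (auto simp: graph_def strong_prod_V_def)
    then have "x \<in> strong_prod_V VG VH" using x by blast
    moreover have "distinct [x, u, v]" using False assms(8) by simp
    moreover have "strong_prod_E EG EH x u" "strong_prod_E EG EH u v" "strong_prod_E EG EH v x"
      using clique x assms(6-8) False by auto
    ultimately show ?thesis
      using cycle_convex_triangle[OF convex] assms(9,10) by blast
  qed (use assms(9,10) in auto)
qed

lemma strong_prod_convex_contains_layers:
  assumes "graph VG EG" "graph VH EH"
    and "connected_graph VG EG"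
    and convex: "cycle_convex (strong_prod_V VG VH) (strong_prod_E EG EH) T"
    and "EH h h'" "g \<in> VG" "(g, h) \<in> T" "(g, h') \<in> T"
  shows "VG \<times> {h, h'} \<subseteq> T"
proof -
  have "h \<noteq> h'" using assms(2,5) by (auto simp: graph_def)
  have "VG \<subseteq> {x. {x} \<times> {h, h'} \<subseteq> T}"
  proof (rule connected_graph_subset_closed[OF assms(3,6)])
    fix x x' assume "x \<in> {x. {x} \<times> {h, h'} \<subseteq> T}" "EG x x'"
    then have "{x, x'} \<times> {h, h'} \<subseteq> T"
      using strong_prod_square_subset[OF assms(1,2) convex \<open>EG x x'\<close> assms(5), of "(x, h)" "(x, h')"]
        \<open>h \<noteq> h'\<close> by auto
    then show "x' \<in> {x. {x} \<times> {h, h'} \<subseteq> T}" by auto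
  qed (use assms(7,8) in auto)
  then show ?thesis by auto
qed

lemma strong_prod_hull_set_diagonal:
  assumes "graph VG EG" "graph VH EH"
    and "connected_graph VG EG" "connected_graph VH EH"
    and "EG g1 g2" "EH h1 h2"
  shows "hull_set (strong_prod_V VG VH) (strong_prod_E EG EH) {(g1, h1), (g2, h2)}"
proof (rule hull_setI)
  have "g1 \<in> VG" "g2 \<in> VG" "h1 \<in> VH" "h2 \<in> VH"
    using assms(1,2,5,6) by (auto simp: graph_def)
  then show "{(g1, h1), (g2, h2)} \<subseteq> strong_prod_V VG VH"
    by (simp add: strong_prod_V_def)
  fix T assume "{(g1, h1), (g2, h2)} \<subseteq> T"
    and convex: "cycle_convex (strong_prod_V VG VH) (strong_prod_E EG EH) T"
  have "g1 \<noteq> g2" using assms(1,5) by (auto simp: graph_def)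
  then have "(g1, h2) \<in> T"
    using strong_prod_square_subset[OF assms(1,2) convex assms(5,6), of "(g1, h1)" "(g2, h2)"]
      \<open>{(g1, h1), (g2, h2)} \<subseteq> T\<close> by auto
  have "VH \<subseteq> {h. VG \<times> {h} \<subseteq> T}"
  proof (rule connected_graph_subset_closed[OF assms(4) \<open>h1 \<in> VH\<close>])
    show "h1 \<in> {h. VG \<times> {h} \<subseteq> T}"
      using strong_prod_convex_contains_layers[OF assms(1-3) convex assms(6) \<open>g1 \<in> VG\<close>]
        \<open>(g1, h2) \<in> T\<close> \<open>{(g1, h1), (g2, h2)} \<subseteq> T\<close> by auto
    fix h h' assume "h \<in> {h. VG \<times> {h} \<subseteq> T}" "EH h h'"
    then have "{g1, g2} \<times> {h, h'} \<subseteq> T"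
      using strong_prod_square_subset[OF assms(1,2) convex assms(5) \<open>EH h h'\<close>, of "(g1, h)" "(g2, h)"]
        \<open>g1 \<noteq> g2\<close> \<open>g1 \<in> VG\<close> \<open>g2 \<in> VG\<close> by auto
    then show "h' \<in> {h. VG \<times> {h} \<subseteq> T}"
      using strong_prod_convex_contains_layers[OF assms(1-3) convex \<open>EH h h'\<close> \<open>g1 \<in> VG\<close>] by auto
  qed
  then show "strong_prod_V VG VH \<subseteq> T" by (auto simp: strong_prod_V_def)
qed

theorem mainTheorem1:
  fixes VG :: "'a set" and EG :: "'a \<Rightarrow> 'a \<Rightarrow> bool"
    and VH :: "'b set" and EH :: "'b \<Rightarrow> 'b \<Rightarrow> bool"
  assumes "graph VG EG" and "graph VH EH"
    and "connected_graph VG EG" and "connected_graph VH EH"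
    and "card VG \<ge> 2" and "card VH \<ge> 2"
  shows "cycle_hull_number (strong_prod_V VG VH) (strong_prod_E EG EH) = 2"
proof -
  obtain g1 h1 where "g1 \<in> VG" "h1 \<in> VH"
    using assms(3,4) by (auto simp: connected_graph_def)
  obtain g2 h2 where "EG g1 g2" "EH h1 h2"
    using connected_graph_has_neighbour[OF assms(3,5) \<open>g1 \<in> VG\<close>]
      connected_graph_has_neighbour[OF assms(4,6) \<open>h1 \<in> VH\<close>] by metis
  have "g1 \<noteq> g2" using assms(1) \<open>EG g1 g2\<close> by (auto simp: graph_def)
  have "finite (strong_prod_V VG VH)"
    using assms(1,2) by (simp add: graph_def strong_prod_V_def)
  moreover have "card (strong_prod_V VG VH) \<ge> 2"
  proof -
    have "2 * 1 \<le> card VG * card VH" using assms(5,6) by (intro mult_le_mono) auto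
    then show ?thesis by (simp add: strong_prod_V_def card_cartesian_product)
  qed
  ultimately show ?thesis
    using strong_prod_hull_set_diagonal[OF assms(1-4) \<open>EG g1 g2\<close> \<open>EH h1 h2\<close>] \<open>g1 \<noteq> g2\<close>
    by (intro cycle_hull_number_eq_2) auto
qed

end
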